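(* Let $r\geq 1$ be an integer and $\varepsilon,\delta\in(0,1)$. Let $\mathcal{H}$ be an $r$-partite $r$-uniform hypergraph with $n$ vertices and $r$-partition $V(\mathcal{H})=V_1\cup\dots\cup V_r$, and suppose $\mathcal{H}$ is not $(\varepsilon,\delta)$-superspread. Then there exists an index $i\in[r]$ such that $e(\mathcal{H}_{[r]\setminus\{i\}})\geq \frac{\varepsilon\delta}{r2^r}e(\mathcal{H})$.
   Context: An $r$-partite $r$-uniform hypergraph with $r$-partition $V_1\cup\dots\cup V_r$ is one in which every edge contains exactly one vertex from each $V_i$. For $I\subseteq[r]$, the restriction $\mathcal{H}_I$ is the hypergraph with vertex set $V_I=\bigcup_{i\in I}V_i$ and edge set $\{e\cap V_I: e\in E(\mathcal{H})\}$ (a set, so repeated intersections are counted once). For $S\subseteq V(\mathcal{H})$, $\deg_{\mathcal{H}}(S)=|\{e\in E(\mathcal{H}): S\subseteq e\}|$. An edge $e$ is $\delta$-heavy if there exist $S\subseteq e$ and $v\in e\setminus S$ with $\deg_{\mathcal{H}}(S\cup\{v\})\geq\delta\deg_{\mathcal{H}}(S)$. $\mathcal{H}$ is $(\varepsilon,\delta)$-superspread if at most $\varepsilon\,e(\mathcal{H})$ of its edges are $\delta$-heavy. *)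

theory Defs
  imports Complex_Main
begin

definition r_partite_uniform ::
  "nat \<Rightarrow> (nat \<Rightarrow> 'a set) \<Rightarrow> 'a set \<Rightarrow> 'a set set \<Rightarrow> bool" where
  "r_partite_uniform r V W E \<longleftrightarrow>
     finite W \<and>
     (\<Union>i\<in>{1..r}. V i) = W \<and>
     (\<forall>i\<in>{1..r}. \<forall>j\<in>{1..r}. i \<noteq> j \<longrightarrow> V i \<inter> V j = {}) \<and>
     (\<forall>e\<in>E. e \<subseteq> W \<and> (\<forall>i\<in>{1..r}. card (e \<inter> V i) = 1))"

definition restrict_edges ::
  "(nat \<Rightarrow> 'a set) \<Rightarrow> nat set \<Rightarrow> 'a set set \<Rightarrow> 'a set set" where
  "restrict_edges V I E = (\<lambda>e. e \<inter> (\<Union>i\<in>I. V i)) ` E"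

definition hdeg :: "'a set set \<Rightarrow> 'a set \<Rightarrow> nat" where
  "hdeg E S = card {e\<in>E. S \<subseteq> e}"

definition heavy :: "real \<Rightarrow> 'a set set \<Rightarrow> 'a set \<Rightarrow> bool" where
  "heavy \<delta> E e \<longleftrightarrow> (\<exists>S\<subseteq>e. \<exists>v\<in>e - S. real (hdeg E (insert v S)) \<ge> \<delta> * real (hdeg E S))"

definition superspread :: "real \<Rightarrow> real \<Rightarrow> 'a set set \<Rightarrow> bool" where
  "superspread \<epsilon> \<delta> E \<longleftrightarrow> real (card {e\<in>E. heavy \<delta> E e}) \<le> \<epsilon> * real (card E)"

end

theory Submission
  imports Defs
begin

text \<open>A heavy edge e comes with S \<subseteq> e and v \<in> e - S; since e meets every part in exactly one
  vertex, S = e \<inter> V_J for some J \<subseteq> [r] and v \<in> V_i for some i \<notin> J. Fix such a type (J, i) and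
  let T be the set of traces e \<inter> V_J of the heavy edges of that type. They number at most
  sum_(S \<in> T) deg S \<le> 1/\<delta> sum_(S \<in> T) deg (S + v_S). An edge containing S + v_S has trace S
  on V_J and vertex v_S in V_i, so it is determined by its trace on V_([r] - {i}); hence the last
  sum is at most e(H_([r] - {i})). Summing over the r 2^r types and averaging over i gives the
  claim.\<close>

abbreviation parts_union :: "(nat \<Rightarrow> 'a set) \<Rightarrow> nat set \<Rightarrow> 'a set" where
  "parts_union V J \<equiv> (\<Union>j\<in>J. V j)"

lemma r_partite_uniform_finite_edges:
  "r_partite_uniform r V W E \<Longrightarrow> finite E"
  unfolding r_partite_uniform_def by (meson Pow_iff finite_Pow_iff finite_subset subsetI)

lemma r_partite_uniform_edge_subset:
  "r_partite_uniform r V W E \<Longrightarrow> e \<in> E \<Longrightarrow> e \<subseteq> parts_union V {1..r}"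
  unfolding r_partite_uniform_def by blast

lemma r_partite_uniform_edge_part:
  assumes "r_partite_uniform r V W E" "e \<in> E" "j \<in> {1..r}"
  obtains x where "e \<inter> V j = {x}"
proof -
  have "card (e \<inter> V j) = 1" using assms unfolding r_partite_uniform_def by blast
  then show ?thesis using that by (rule card_1_singletonE)
qed

lemma r_partite_uniform_edge_part_eq:
  assumes "r_partite_uniform r V W E" "e \<in> E" "j \<in> {1..r}" "x \<in> e" "x \<in> V j"
  shows "e \<inter> V j = {x}"
proof -
  obtain y where "e \<inter> V j = {y}" using r_partite_uniform_edge_part[OF assms(1-3)] .
  with assms(4,5) show ?thesis by auto
qed

lemma r_partite_uniform_edge_in_part:
  "r_partite_uniform r V W E \<Longrightarrow> e \<in> E \<Longrightarrow> x \<in> e \<Longrightarrow> \<exists>j\<in>{1..r}. x \<in> V j"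
  using r_partite_uniform_edge_subset by blast

lemma r_partite_uniform_edge_eqI:
  assumes rp: "r_partite_uniform r V W E" and "a \<in> E" "b \<in> E" "i \<in> {1..r}"
    and "a \<inter> parts_union V ({1..r} - {i}) = b \<inter> parts_union V ({1..r} - {i})"
    and "a \<inter> V i = b \<inter> V i"
  shows "a = b"
proof -
  let ?R = "parts_union V ({1..r} - {i})"
  have split: "x = (x \<inter> ?R) \<union> (x \<inter> V i)" if "x \<in> E" for x
    using r_partite_uniform_edge_subset[OF rp that] \<open>i \<in> {1..r}\<close> by blast
  have "a = (a \<inter> ?R) \<union> (a \<inter> V i)" using split[OF \<open>a \<in> E\<close>] .
  also have "\<dots> = (b \<inter> ?R) \<union> (b \<inter> V i)" using assms(5,6) by (simp only:)
  also have "\<dots> = b" using split[OF \<open>b \<in> E\<close>] by (rule sym)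
  finally show ?thesis .
qed

lemma r_partite_uniform_trace_eq:
  assumes rp: "r_partite_uniform r V W E" and "e \<in> E" "e' \<in> E" "J \<subseteq> {1..r}"
    and sub: "e \<inter> parts_union V J \<subseteq> e'"
  shows "e' \<inter> parts_union V J = e \<inter> parts_union V J"
proof
  show "e \<inter> parts_union V J \<subseteq> e' \<inter> parts_union V J" using sub by blast
  show "e' \<inter> parts_union V J \<subseteq> e \<inter> parts_union V J"
  proof
    fix x assume "x \<in> e' \<inter> parts_union V J"
    then obtain j where j: "j \<in> J" "x \<in> e'" "x \<in> V j" by blast
    with assms have jr: "j \<in> {1..r}" by blast
    obtain y where y: "e \<inter> V j = {y}" using r_partite_uniform_edge_part[OF rp \<open>e \<in> E\<close> jr] .
    with j sub have "y \<in> e'" by blast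
    with y r_partite_uniform_edge_part_eq[OF rp \<open>e' \<in> E\<close> jr j(2,3)] have "x = y" by auto
    with y j(1) show "x \<in> e \<inter> parts_union V J" by blast
  qed
qed

definition heavy_type_edges ::
  "(nat \<Rightarrow> 'a set) \<Rightarrow> real \<Rightarrow> 'a set set \<Rightarrow> nat set \<Rightarrow> nat \<Rightarrow> 'a set set" where
  "heavy_type_edges V \<delta> E J i = {e\<in>E. \<exists>v\<in>e \<inter> V i.
     \<delta> * real (hdeg E (e \<inter> parts_union V J)) \<le> real (hdeg E (insert v (e \<inter> parts_union V J)))}"

lemma heavy_type_edges_subset: "heavy_type_edges V \<delta> E J i \<subseteq> E"
  unfolding heavy_type_edges_def by blast

lemma heavy_imp_heavy_type_edges:
  assumes rp: "r_partite_uniform r V W E" and e: "e \<in> E" and "heavy \<delta> E e"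
  shows "\<exists>J\<in>Pow {1..r}. \<exists>i\<in>{1..r} - J. e \<in> heavy_type_edges V \<delta> E J i"
proof -
  obtain S v where S: "S \<subseteq> e" "v \<in> e - S" "\<delta> * real (hdeg E S) \<le> real (hdeg E (insert v S))"
    using \<open>heavy \<delta> E e\<close> unfolding heavy_def by blast
  define J where "J = {j\<in>{1..r}. e \<inter> V j \<subseteq> S}"
  have trace: "e \<inter> parts_union V J = S"
  proof
    show "e \<inter> parts_union V J \<subseteq> S" unfolding J_def by blast
    show "S \<subseteq> e \<inter> parts_union V J"
    proof
      fix x assume "x \<in> S"
      with S have "x \<in> e" by blast
      then obtain j where j: "j \<in> {1..r}" "x \<in> V j"
        using r_partite_uniform_edge_in_part[OF rp e] by blast
      with \<open>x \<in> S\<close> have "j \<in> J"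
        using r_partite_uniform_edge_part_eq[OF rp e j(1) \<open>x \<in> e\<close> j(2)] unfolding J_def by simp
      with \<open>x \<in> e\<close> j show "x \<in> e \<inter> parts_union V J" by blast
    qed
  qed
  have "v \<in> e" "v \<notin> S" using S(2) by auto
  then obtain i where i: "i \<in> {1..r}" "v \<in> V i"
    using r_partite_uniform_edge_in_part[OF rp e] by blast
  have "i \<notin> J"
    using r_partite_uniform_edge_part_eq[OF rp e i(1) \<open>v \<in> e\<close> i(2)] \<open>v \<notin> S\<close>
    unfolding J_def by simp
  moreover have "e \<in> heavy_type_edges V \<delta> E J i"
    unfolding heavy_type_edges_def using e S(3) \<open>v \<in> e\<close> i(2) by (auto simp: trace)
  moreover have "J \<in> Pow {1..r}" unfolding J_def by blast
  ultimately show ?thesis using i(1) by blast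
qed

lemma card_le_sum_hdeg:
  assumes "finite E" "finite T" "H \<subseteq> E" "\<And>e. e \<in> H \<Longrightarrow> \<exists>S\<in>T. S \<subseteq> e"
  shows "card H \<le> (\<Sum>S\<in>T. hdeg E S)"
proof -
  have "H \<subseteq> (\<Union>S\<in>T. {e\<in>E. S \<subseteq> e})" using assms(3,4) by blast
  then have "card H \<le> card (\<Union>S\<in>T. {e\<in>E. S \<subseteq> e})"
    by (rule card_mono[rotated]) (use assms(1,2) in auto)
  also have "\<dots> \<le> (\<Sum>S\<in>T. hdeg E S)"
    unfolding hdeg_def by (rule card_UN_le[OF assms(2)])
  finally show ?thesis .
qed

lemma sum_hdeg_insert_part_le_card_restrict_edges:
  assumes rp: "r_partite_uniform r V W E" and J: "J \<subseteq> {1..r}" and i: "i \<in> {1..r}" "i \<notin> J"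
    and T: "T \<subseteq> restrict_edges V J E" and g: "\<And>S. S \<in> T \<Longrightarrow> g S \<in> V i"
  shows "(\<Sum>S\<in>T. hdeg E (insert (g S) S)) \<le> card (restrict_edges V ({1..r} - {i}) E)"
proof -
  let ?U = "parts_union V J" and ?R = "parts_union V ({1..r} - {i})"
  define D where "D S = {e\<in>E. insert (g S) S \<subseteq> e}" for S
  have fE: "finite E" using r_partite_uniform_finite_edges[OF rp] .
  have fT: "finite T"
    by (rule finite_subset[OF T]) (simp add: restrict_edges_def fE)
  have D_trace: "e \<inter> ?U = S \<and> e \<inter> V i = {g S}" if "S \<in> T" "e \<in> D S" for S e
  proof
    obtain e0 where e0: "e0 \<in> E" "S = e0 \<inter> ?U"
      using T \<open>S \<in> T\<close> unfolding restrict_edges_def by blast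
    from \<open>e \<in> D S\<close> have e: "e \<in> E" "S \<subseteq> e" "g S \<in> e" unfolding D_def by auto
    show "e \<inter> ?U = S"
      using r_partite_uniform_trace_eq[OF rp e0(1) e(1) J] e0(2) e(2) by simp
    show "e \<inter> V i = {g S}"
      using r_partite_uniform_edge_part_eq[OF rp e(1) i(1) e(3) g[OF \<open>S \<in> T\<close>]] .
  qed
  have "(\<Sum>S\<in>T. hdeg E (insert (g S) S)) = card (\<Union>S\<in>T. D S)"
  proof (unfold hdeg_def D_def[symmetric], rule card_UN_disjoint[symmetric])
    show "\<forall>S\<in>T. finite (D S)" using fE unfolding D_def by auto
    show "\<forall>S\<in>T. \<forall>S'\<in>T. S \<noteq> S' \<longrightarrow> D S \<inter> D S' = {}" using D_trace by blast
  qed (rule fT)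
  also have "\<dots> \<le> card (restrict_edges V ({1..r} - {i}) E)"
  proof (rule card_inj_on_le)
    show "inj_on (\<lambda>e. e \<inter> ?R) (\<Union>S\<in>T. D S)"
    proof
      fix a b assume a: "a \<in> (\<Union>S\<in>T. D S)" and b: "b \<in> (\<Union>S\<in>T. D S)" and ab: "a \<inter> ?R = b \<inter> ?R"
      from ab J i have "a \<inter> ?U = b \<inter> ?U" by blast
      obtain S S' where S: "S \<in> T" "a \<in> D S" and S': "S' \<in> T" "b \<in> D S'"
        using a b by blast
      with \<open>a \<inter> ?U = b \<inter> ?U\<close> have "S = S'"
        using D_trace[OF S] D_trace[OF S'] by simp
      then have "a \<inter> V i = b \<inter> V i"
        using D_trace[OF S] D_trace[OF S'] by simp
      moreover have "a \<in> E" "b \<in> E" using S(2) S'(2) unfolding D_def by auto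
      ultimately show "a = b" using r_partite_uniform_edge_eqI[OF rp _ _ i(1) ab] by blast
    qed
    show "(\<lambda>e. e \<inter> ?R) ` (\<Union>S\<in>T. D S) \<subseteq> restrict_edges V ({1..r} - {i}) E"
      unfolding restrict_edges_def D_def by blast
    show "finite (restrict_edges V ({1..r} - {i}) E)"
      unfolding restrict_edges_def using fE by simp
  qed
  finally show ?thesis .
qed

lemma card_heavy_type_edges_le:
  assumes rp: "r_partite_uniform r V W E" and J: "J \<subseteq> {1..r}" and i: "i \<in> {1..r}" "i \<notin> J"
    and "\<delta> > 0"
  shows "\<delta> * card (heavy_type_edges V \<delta> E J i) \<le> card (restrict_edges V ({1..r} - {i}) E)"
proof -
  let ?H = "heavy_type_edges V \<delta> E J i"
  define T where "T = (\<lambda>e. e \<inter> parts_union V J) ` ?H"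
  have T_sub: "T \<subseteq> restrict_edges V J E"
    unfolding T_def restrict_edges_def by (rule image_mono[OF heavy_type_edges_subset])
  have fE: "finite E" using r_partite_uniform_finite_edges[OF rp] .
  have fT: "finite T"
    unfolding T_def by (rule finite_imageI[OF finite_subset[OF heavy_type_edges_subset fE]])
  have "\<forall>S\<in>T. \<exists>v. v \<in> V i \<and> \<delta> * real (hdeg E S) \<le> real (hdeg E (insert v S))"
    unfolding T_def heavy_type_edges_def by blast
  then obtain g where g: "\<And>S. S \<in> T \<Longrightarrow> g S \<in> V i"
    "\<And>S. S \<in> T \<Longrightarrow> \<delta> * real (hdeg E S) \<le> real (hdeg E (insert (g S) S))"
    by metis
  have "card ?H \<le> (\<Sum>S\<in>T. hdeg E S)"
    by (rule card_le_sum_hdeg[OF fE fT heavy_type_edges_subset]) (auto simp: T_def)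
  then have "\<delta> * card ?H \<le> (\<Sum>S\<in>T. \<delta> * hdeg E S)"
    using \<open>\<delta> > 0\<close> by (simp add: sum_distrib_left[symmetric] flip: of_nat_sum)
  also have "\<dots> \<le> (\<Sum>S\<in>T. hdeg E (insert (g S) S))"
    unfolding of_nat_sum by (rule sum_mono) (rule g(2))
  also have "\<dots> \<le> card (restrict_edges V ({1..r} - {i}) E)"
    unfolding of_nat_sum[symmetric] of_nat_le_iff
    by (rule sum_hdeg_insert_part_le_card_restrict_edges[OF rp J i T_sub]) (rule g(1))
  finally show ?thesis .
qed

lemma card_heavy_le:
  assumes rp: "r_partite_uniform r V W E" and "\<delta> > 0"
  shows "\<delta> * card {e\<in>E. heavy \<delta> E e}
           \<le> 2 ^ r * (\<Sum>i\<in>{1..r}. real (card (restrict_edges V ({1..r} - {i}) E)))"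
proof -
  let ?types = "Sigma (Pow {1..r}) (\<lambda>J. {1..r} - J)"
  let ?c = "\<lambda>i. real (card (restrict_edges V ({1..r} - {i}) E))"
  have "{e\<in>E. heavy \<delta> E e} \<subseteq> (\<Union>(J, i)\<in>?types. heavy_type_edges V \<delta> E J i)"
  proof
    fix e assume "e \<in> {e\<in>E. heavy \<delta> E e}"
    then obtain J i where "J \<in> Pow {1..r}" "i \<in> {1..r} - J" "e \<in> heavy_type_edges V \<delta> E J i"
      using heavy_imp_heavy_type_edges[OF rp] by blast
    then show "e \<in> (\<Union>(J, i)\<in>?types. heavy_type_edges V \<delta> E J i)" by blast
  qed
  moreover have "finite (\<Union>(J, i)\<in>?types. heavy_type_edges V \<delta> E J i)"
    by (rule finite_subset[OF _ r_partite_uniform_finite_edges[OF rp]])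
       (use heavy_type_edges_subset in blast)
  ultimately have "card {e\<in>E. heavy \<delta> E e} \<le> card (\<Union>(J, i)\<in>?types. heavy_type_edges V \<delta> E J i)"
    by (rule card_mono[rotated])
  also have "\<dots> \<le> (\<Sum>(J, i)\<in>?types. card (heavy_type_edges V \<delta> E J i))"
    unfolding case_prod_unfold by (rule card_UN_le) simp
  finally have "\<delta> * card {e\<in>E. heavy \<delta> E e} \<le> (\<Sum>(J, i)\<in>?types. \<delta> * card (heavy_type_edges V \<delta> E J i))"
    using \<open>\<delta> > 0\<close> by (simp add: sum_distrib_left[symmetric] case_prod_unfold flip: of_nat_sum)
  also have "\<dots> \<le> (\<Sum>(J, i)\<in>?types. ?c i)"
  proof (rule sum_mono)
    fix p assume "p \<in> ?types"
    moreover obtain J i where p: "p = (J, i)" by fastforce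
    ultimately have "J \<subseteq> {1..r}" "i \<in> {1..r}" "i \<notin> J" by auto
    then have "\<delta> * card (heavy_type_edges V \<delta> E J i) \<le> ?c i"
      by (rule card_heavy_type_edges_le[OF rp _ _ _ \<open>\<delta> > 0\<close>])
    then show "(\<lambda>(J, i). \<delta> * card (heavy_type_edges V \<delta> E J i)) p \<le> (\<lambda>(J, i). ?c i) p"
      unfolding p by simp
  qed
  also have "\<dots> = (\<Sum>J\<in>Pow {1..r}. \<Sum>i\<in>{1..r} - J. ?c i)"
    by (rule sum.Sigma[symmetric]) auto
  also have "\<dots> \<le> (\<Sum>J\<in>Pow {1..r}. \<Sum>i\<in>{1..r}. ?c i)"
    by (intro sum_mono sum_mono2) auto
  also have "\<dots> = 2 ^ r * (\<Sum>i\<in>{1..r}. ?c i)"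
    by (simp add: card_Pow)
  finally show ?thesis .
qed

theorem lemma2p6:
  fixes r n :: nat and \<epsilon> \<delta> :: real
    and V :: "nat \<Rightarrow> 'a set" and W :: "'a set" and E :: "'a set set"
  assumes "r \<ge> 1"
    and "0 < \<epsilon>" "\<epsilon> < 1" "0 < \<delta>" "\<delta> < 1"
    and "r_partite_uniform r V W E"
    and "card W = n"
    and "\<not> superspread \<epsilon> \<delta> E"
  shows "\<exists>i\<in>{1..r}. real (card (restrict_edges V ({1..r} - {i}) E))
           \<ge> \<epsilon> * \<delta> / (real r * 2 ^ r) * real (card E)"
proof (rule ccontr)
  let ?c = "\<lambda>i. real (card (restrict_edges V ({1..r} - {i}) E))"
  let ?bound = "\<epsilon> * \<delta> / (real r * 2 ^ r) * real (card E)"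
  assume "\<not> ?thesis"
  then have "(\<Sum>i\<in>{1..r}. ?c i) < (\<Sum>i\<in>{1..r}. ?bound)"
    using \<open>r \<ge> 1\<close> by (intro sum_strict_mono) (auto simp: not_le)
  also have "\<dots> = \<delta> * (\<epsilon> * card E) / 2 ^ r"
    using \<open>r \<ge> 1\<close> by simp
  also have "\<dots> < \<delta> * card {e\<in>E. heavy \<delta> E e} / 2 ^ r"
    using \<open>\<not> superspread \<epsilon> \<delta> E\<close> \<open>0 < \<delta>\<close> unfolding superspread_def
    by (simp add: divide_strict_right_mono)
  also have "\<dots> \<le> (\<Sum>i\<in>{1..r}. ?c i)"
    using card_heavy_le[OF \<open>r_partite_uniform r V W E\<close> \<open>0 < \<delta>\<close>]
    by (subst pos_divide_le_eq) (simp_all add: mult.commute)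
  finally show False by simp
qed

end
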